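(* For $\delta>0$ consider the data on $\mathbb{R}$ at times $0,1/3,2/3,1$: $\mu^\star_0=\mu^\star_1=\mathcal N(0,1)$ and $\mu^\star_{1/3}=\mu^\star_{2/3}=\mathcal N(0,\delta^2)$. For all sufficiently small $\delta>0$, the E-spline interpolation and the transport spline interpolation of these data do not coincide.
   Context: Transport spline: draw $Y_0\sim\mu^\star_0$, set $Y_{t_i}=T_i(Y_{t_{i-1}})$ with $T_i$ the Monge (optimal transport, quadratic cost) map from $\mu^\star_{t_{i-1}}$ to $\mu^\star_{t_i}$, let $(Y_t)$ be the Euclidean natural cubic spline (piecewise cubic, $C^2$, zero second derivative at $0,1$) through $(t_i,Y_{t_i})$, and take the curve $\mu_t=\mathrm{law}(Y_t)$. E-spline: a minimizer of $\int_0^1\|\partial_t^2F^{-1}_{\mu_t}\|^2_{L^2[0,1]}dt$ over curves $(\mu_t)$ in $\mathcal P_2(\mathbb{R})$ with $\mu_{t_i}=\mu^\star_{t_i}$, where $F^{-1}_\mu$ is the quantile function (equivalently, minimizing $\int_0^1\|\nabla_{v_t}v_t\|^2_{L^2(\mu_t)}dt$ with $v_t$ the tangent velocity field). *)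

theory Defs
  imports "HOL-Probability.Probability"
begin

definition P2 :: "real measure \<Rightarrow> bool" where
  "P2 \<mu> \<longleftrightarrow> sets \<mu> = sets borel \<and> prob_space \<mu> \<and> integrable \<mu> (\<lambda>x. x\<^sup>2)"

text \<open>Centred Gaussian N(0, sigma^2) (sigma = standard deviation).\<close>
definition gaussian :: "real \<Rightarrow> real measure" where
  "gaussian \<sigma> = density lborel (\<lambda>x. ennreal (normal_density 0 \<sigma> x))"

text \<open>Quantile function (generalised inverse of the cdf), used for u in (0,1).\<close>
definition quantile :: "real measure \<Rightarrow> real \<Rightarrow> real" where
  "quantile \<mu> u = Inf {x. u \<le> cdf \<mu> x}"

text \<open>Energy of a curve: integral over t in [0,1] of the squared L2[0,1]-norm of the
  second time derivative of the quantile functions.  The second derivative is taken in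
  the weak sense: A is a square integrable function of (t,u) such that for a.e. u,
  Q(t,u) = Q(0,u) + t V(u) + int_0^t (t-s) A(s,u) ds on [0,1].  If no such A exists the
  energy is infinite (Inf of the empty set).\<close>
definition spline_energy :: "(real \<Rightarrow> real measure) \<Rightarrow> ennreal" where
  "spline_energy \<mu> = Inf {(\<integral>\<^sup>+ p. indicator ({0..1} \<times> {0<..<1}) p * ennreal ((A (fst p) (snd p))\<^sup>2) \<partial>lborel)
      | A :: real \<Rightarrow> real \<Rightarrow> real.
        (\<lambda>p. A (fst p) (snd p)) \<in> borel_measurable lborel \<and>
        (\<exists>V :: real \<Rightarrow> real. AE u in lborel. u \<in> {0<..<1} \<longrightarrow>
            set_integrable lborel {0..1} (\<lambda>s. A s u) \<and>
            (\<forall>t\<in>{0..1}. quantile (\<mu> t) u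
               = quantile (\<mu> 0) u + t * V u + (LBINT s:{0..t}. (t - s) * A s u)))}"

definition is_E_spline ::
  "(nat \<Rightarrow> real) \<Rightarrow> nat \<Rightarrow> (nat \<Rightarrow> real measure) \<Rightarrow> (real \<Rightarrow> real measure) \<Rightarrow> bool" where
  "is_E_spline tk N data \<mu> \<longleftrightarrow>
     (\<forall>t\<in>{0..1}. P2 (\<mu> t)) \<and> (\<forall>i\<le>N. \<mu> (tk i) = data i) \<and>
     (\<forall>\<nu>. (\<forall>t\<in>{0..1}. P2 (\<nu> t)) \<and> (\<forall>i\<le>N. \<nu> (tk i) = data i)
          \<longrightarrow> spline_energy \<mu> \<le> spline_energy \<nu>)"

definition monge_map :: "real measure \<Rightarrow> real measure \<Rightarrow> (real \<Rightarrow> real) \<Rightarrow> bool" where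
  "monge_map \<mu> \<nu> T \<longleftrightarrow> T \<in> borel_measurable \<mu> \<and> distr \<mu> borel T = \<nu> \<and>
     (\<forall>S \<in> borel_measurable \<mu>. distr \<mu> borel S = \<nu> \<longrightarrow>
        (\<integral>\<^sup>+ x. ennreal ((x - T x)\<^sup>2) \<partial>\<mu>) \<le> (\<integral>\<^sup>+ x. ennreal ((x - S x)\<^sup>2) \<partial>\<mu>))"

definition nat_cubic_spline ::
  "(nat \<Rightarrow> real) \<Rightarrow> nat \<Rightarrow> (nat \<Rightarrow> real) \<Rightarrow> (real \<Rightarrow> real) \<Rightarrow> bool" where
  "nat_cubic_spline tk N y s \<longleftrightarrow>
     (\<forall>i\<le>N. s (tk i) = y i) \<and>
     (\<forall>i\<in>{1..N}. \<exists>a b c d. \<forall>t\<in>{tk (i - 1)..tk i}. s t = a + b * t + c * t ^ 2 + d * t ^ 3) \<and>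
     (\<exists>s1 s2. (\<forall>t\<in>{tk 0..tk N}.
                 (s has_real_derivative s1 t) (at t within {tk 0..tk N}) \<and>
                 (s1 has_real_derivative s2 t) (at t within {tk 0..tk N})) \<and>
              continuous_on {tk 0..tk N} s2 \<and> s2 (tk 0) = 0 \<and> s2 (tk N) = 0)"

fun iter_maps :: "(nat \<Rightarrow> real \<Rightarrow> real) \<Rightarrow> nat \<Rightarrow> real \<Rightarrow> real" where
  "iter_maps T 0 x = x"
| "iter_maps T (Suc i) x = T (Suc i) (iter_maps T i x)"

text \<open>Transport spline: Y_0 ~ data 0 (realised as the identity on the probability space
  data 0), Y_{t_i} obtained by Monge maps, Y_t the natural cubic spline in t, mu_t = law(Y_t).\<close>
definition is_transport_spline ::
  "(nat \<Rightarrow> real) \<Rightarrow> nat \<Rightarrow> (nat \<Rightarrow> real measure) \<Rightarrow> (real \<Rightarrow> real measure) \<Rightarrow> bool" where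
  "is_transport_spline tk N data \<mu> \<longleftrightarrow>
     (\<exists>T Y. (\<forall>i\<in>{1..N}. monge_map (data (i - 1)) (data i) (T i)) \<and>
            (\<forall>\<omega>. nat_cubic_spline tk N (\<lambda>i. iter_maps T i \<omega>) (\<lambda>t. Y t \<omega>)) \<and>
            (\<forall>t\<in>{0..1}. \<mu> t = distr (data 0) borel (Y t)))"

end

theory Submission
  imports Defs
begin

text \<open>For centred Gaussian data all Monge maps are linear, so the transport spline moves every
  sample along one and the same natural cubic spline: on \<open>[1/3, 2/3]\<close>, \<open>\<mu>\<^sub>t\<close> is the law of
  \<open>S(t) X\<close> with \<open>X\<close> standard normal and \<open>S\<close> the natural spline through the standard
  deviations \<open>1, \<delta>, \<delta>, 1\<close>.  For \<open>\<delta> < 3/23\<close> this spline has a simple zero \<open>t\<^sub>0\<close> in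
  \<open>(1/3, 1/2)\<close>, so every quantile curve \<open>t \<mapsto> \<bar>S(t)\<bar> q(u)\<close> of \<open>\<mu>\<close> with \<open>q(u) \<noteq> 0\<close>
  (\<open>q\<close> the standard normal quantile function) has a corner at \<open>t\<^sub>0\<close>.  An E-spline,
  however, has finite energy (a curve of Gaussians with a smooth positive standard deviation
  through the data is an admissible competitor), so for almost every \<open>u\<close> its quantile curve has
  an integrable weak second derivative and is \<open>C\<^sup>1\<close>.\<close>

section \<open>Centred Gaussian measures\<close>

lemma prob_space_gaussian: "0 < \<sigma> \<Longrightarrow> prob_space (gaussian \<sigma>)"
  unfolding gaussian_def by (rule prob_space_normal_density)

lemma sets_gaussian [simp, measurable_cong]: "sets (gaussian \<sigma>) = sets borel"
  by (simp add: gaussian_def)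

lemma space_gaussian [simp]: "space (gaussian \<sigma>) = UNIV"
  by (simp add: gaussian_def)

lemma cdf_distribution_gaussian: "0 < \<sigma> \<Longrightarrow> cdf_distribution (gaussian \<sigma>)"
  by (simp add: cdf_distribution_def real_distribution_def real_distribution_axioms_def
      prob_space_gaussian)

lemma distr_gaussian_scale:
  assumes "0 < \<sigma>" and "c \<noteq> 0"
  shows "distr (gaussian \<sigma>) borel (\<lambda>x. c * x) = gaussian (\<bar>c\<bar> * \<sigma>)"
proof -
  interpret prob_space "gaussian \<sigma>" by (rule prob_space_gaussian) fact
  have "distributed (gaussian \<sigma>) lborel (\<lambda>x. x) (normal_density 0 \<sigma>)"
    unfolding distributed_def by (auto simp: distr_id2 gaussian_def)
  from normal_density_affine[OF this assms, of 0]
  have "distr (gaussian \<sigma>) lborel (\<lambda>x. c * x) = gaussian (\<bar>c\<bar> * \<sigma>)"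
    unfolding distributed_def gaussian_def by simp
  moreover have "distr (gaussian \<sigma>) borel (\<lambda>x. c * x) = distr (gaussian \<sigma>) lborel (\<lambda>x. c * x)"
    by (rule distr_cong) auto
  ultimately show ?thesis by simp
qed

lemma integrable_gaussian_square: "0 < \<sigma> \<Longrightarrow> integrable (gaussian \<sigma>) (\<lambda>x. x\<^sup>2)"
  unfolding gaussian_def
  using normal_moment_even[where \<mu>=0 and \<sigma>=\<sigma> and k=1]
  by (subst integrable_density) (auto simp: has_bochner_integral_iff power2_eq_square)

lemma P2_gaussian: "0 < \<sigma> \<Longrightarrow> P2 (gaussian \<sigma>)"
  unfolding P2_def by (simp add: prob_space_gaussian integrable_gaussian_square)

lemma measure_gaussian_singleton: "measure (gaussian \<sigma>) {x} = 0"
proof -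
  have "AE y in lborel. y \<in> {x} \<longrightarrow> ennreal (normal_density 0 \<sigma> y) = 0"
    using AE_lborel_singleton[of x] by eventually_elim simp
  then have "{x} \<in> null_sets (gaussian \<sigma>)"
    unfolding gaussian_def by (subst null_sets_density_iff) auto
  then show ?thesis by (simp add: measure_def null_setsD1)
qed

section \<open>Monge maps between centred Gaussians\<close>

lemma integrable_square_diff:
  fixes f g :: "'a \<Rightarrow> real"
  assumes [measurable]: "f \<in> borel_measurable M" "g \<in> borel_measurable M"
    and "integrable M (\<lambda>x. (f x)\<^sup>2)" "integrable M (\<lambda>x. (g x)\<^sup>2)"
  shows "integrable M (\<lambda>x. (f x - g x)\<^sup>2)"
proof (rule Bochner_Integration.integrable_bound[of _ "\<lambda>x. 2 * (f x)\<^sup>2 + 2 * (g x)\<^sup>2"])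
  have "(x - y)\<^sup>2 \<le> 2 * x\<^sup>2 + 2 * y\<^sup>2" for x y :: real
    using zero_le_power2[of "x + y"] by (simp add: power2_eq_square algebra_simps)
  then show "AE x in M. norm ((f x - g x)\<^sup>2) \<le> norm (2 * (f x)\<^sup>2 + 2 * (g x)\<^sup>2)"
    by simp
qed (use assms in auto)

lemma monge_map_cost_le:
  assumes T: "monge_map M \<nu> T" and S: "S \<in> borel_measurable M" "distr M borel S = \<nu>"
    and int: "integrable M (\<lambda>x. (x - T x)\<^sup>2)" "integrable M (\<lambda>x. (x - S x)\<^sup>2)"
  shows "integral\<^sup>L M (\<lambda>x. (x - T x)\<^sup>2) \<le> integral\<^sup>L M (\<lambda>x. (x - S x)\<^sup>2)"
proof -
  have "(\<integral>\<^sup>+ x. ennreal ((x - T x)\<^sup>2) \<partial>M) \<le> (\<integral>\<^sup>+ x. ennreal ((x - S x)\<^sup>2) \<partial>M)"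
    using T S unfolding monge_map_def by blast
  then have "ennreal (integral\<^sup>L M (\<lambda>x. (x - T x)\<^sup>2)) \<le> ennreal (integral\<^sup>L M (\<lambda>x. (x - S x)\<^sup>2))"
    using int by (simp add: nn_integral_eq_integral)
  moreover have "0 \<le> integral\<^sup>L M (\<lambda>x. (x - S x)\<^sup>2)"
    by (simp add: integral_nonneg_AE)
  ultimately show ?thesis
    by simp
qed

text \<open>Expanding \<open>(T x - k x)\<^sup>2\<close> and using that \<open>T x\<close> and \<open>k x\<close> have the same second
  moment, the optimality of \<open>T\<close> against the competitor \<open>k x\<close> forces \<open>E (T x - k x)\<^sup>2 \<le> 0\<close>.\<close>
lemma monge_map_eq_scaling_AE:
  assumes M: "prob_space M" "sets M = sets borel" "integrable M (\<lambda>x. x\<^sup>2)"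
    and k: "0 < k" "distr M borel (\<lambda>x. k * x) = \<nu>"
    and T: "monge_map M \<nu> T"
  shows "AE x in M. T x = k * x"
proof -
  interpret prob_space M by (fact M(1))
  have [measurable_cong]: "sets M = sets borel" by (fact M(2))
  have [measurable]: "T \<in> borel_measurable M" and law_T: "distr M borel T = \<nu>"
    using T unfolding monge_map_def by auto
  let ?m = "integral\<^sup>L M (\<lambda>x. x\<^sup>2)"
  have law_eq: "distr M borel T = distr M borel (\<lambda>x. k * x)"
    using law_T k by simp
  have int_T: "integrable M (\<lambda>x. (T x)\<^sup>2)" and moment_T: "integral\<^sup>L M (\<lambda>x. (T x)\<^sup>2) = k\<^sup>2 * ?m"
    using integrable_distr_eq[of T M borel "\<lambda>y. y\<^sup>2"] integral_distr[of T M borel "\<lambda>y. y\<^sup>2"]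
      integrable_distr_eq[of "\<lambda>x. k * x" M borel "\<lambda>y. y\<^sup>2"]
      integral_distr[of "\<lambda>x. k * x" M borel "\<lambda>y. y\<^sup>2"] M(3)
    by (simp_all add: law_eq power_mult_distrib)
  have int_D: "integrable M (\<lambda>x. (x - T x)\<^sup>2)"
    using M(3) int_T by (intro integrable_square_diff) auto
  have "(x - k * x)\<^sup>2 = (1 - k)\<^sup>2 * x\<^sup>2" for x
    by (simp add: power2_eq_square algebra_simps)
  then have cost: "integral\<^sup>L M (\<lambda>x. (x - T x)\<^sup>2) \<le> (1 - k)\<^sup>2 * ?m"
    using monge_map_cost_le[OF T _ k(2) int_D] M(3) by (simp del: power_mult_distrib)
  have expand: "(T x - k * x)\<^sup>2 = (1 - k) * (T x)\<^sup>2 + (k\<^sup>2 - k) * x\<^sup>2 + k * (x - T x)\<^sup>2" for x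
    by (simp add: power2_eq_square algebra_simps)
  have int_E: "integrable M (\<lambda>x. (T x - k * x)\<^sup>2)"
    unfolding expand using M(3) int_T int_D by simp
  have "integral\<^sup>L M (\<lambda>x. (T x - k * x)\<^sup>2)
      = (1 - k) * (k\<^sup>2 * ?m) + (k\<^sup>2 - k) * ?m + k * integral\<^sup>L M (\<lambda>x. (x - T x)\<^sup>2)"
    unfolding expand using M(3) int_T int_D moment_T by simp
  also have "\<dots> \<le> (1 - k) * (k\<^sup>2 * ?m) + (k\<^sup>2 - k) * ?m + k * ((1 - k)\<^sup>2 * ?m)"
    using cost k by simp
  also have "\<dots> = 0"
    by (simp add: power2_eq_square algebra_simps)
  finally have "integral\<^sup>L M (\<lambda>x. (T x - k * x)\<^sup>2) = 0"
    by (intro antisym) simp_all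
  then have "AE x in M. (T x - k * x)\<^sup>2 = 0"
    using integral_nonneg_eq_0_iff_AE[OF int_E] by simp
  then show ?thesis by eventually_elim simp
qed

lemma monge_map_gaussian_AE:
  assumes "0 < a" "0 < b" and "monge_map (gaussian a) (gaussian b) T"
  shows "AE x in gaussian a. T x = b / a * x"
proof (rule monge_map_eq_scaling_AE)
  show "distr (gaussian a) borel (\<lambda>x. b / a * x) = gaussian b"
    using distr_gaussian_scale[of a "b / a"] assms by simp
qed (use assms in \<open>simp_all add: prob_space_gaussian integrable_gaussian_square\<close>)

lemma AE_iter_maps_monge_gaussian:
  assumes pos: "\<forall>i\<le>N. 0 < s i"
    and monge: "\<forall>i\<in>{1..N}. monge_map (gaussian (s (i - 1))) (gaussian (s i)) (T i)"
    and "i \<le> N"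
  shows "AE \<omega> in gaussian (s 0). iter_maps T i \<omega> = s i / s 0 * \<omega>"
  using \<open>i \<le> N\<close>
proof (induction i)
  case 0
  then show ?case using pos[rule_format, of 0] by simp
next
  case (Suc i)
  have monge_Suc: "monge_map (gaussian (s i)) (gaussian (s (Suc i))) (T (Suc i))"
    using monge[rule_format, of "Suc i"] Suc.prems by simp
  then have "T (Suc i) \<in> borel_measurable (gaussian (s i))"
    unfolding monge_map_def by blast
  then have [measurable]: "T (Suc i) \<in> borel_measurable borel"
    by (simp add: measurable_def)
  have si: "s i \<noteq> 0"
    using pos[rule_format, of i] Suc.prems by simp
  have T_AE: "AE y in gaussian (s i). T (Suc i) y = s (Suc i) / s i * y"
    using monge_map_gaussian_AE[OF _ _ monge_Suc] pos Suc.prems by simp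
  have law_s: "gaussian (s i) = distr (gaussian (s 0)) borel (\<lambda>\<omega>. s i / s 0 * \<omega>)"
    using distr_gaussian_scale[of "s 0" "s i / s 0"] pos[rule_format, of 0] pos[rule_format, of i]
      Suc.prems by simp
  have "AE y in distr (gaussian (s 0)) borel (\<lambda>\<omega>. s i / s 0 * \<omega>).
      T (Suc i) y = s (Suc i) / s i * y"
    using T_AE unfolding law_s .
  then have "AE \<omega> in gaussian (s 0). T (Suc i) (s i / s 0 * \<omega>) = s (Suc i) / s i * (s i / s 0 * \<omega>)"
    by (subst (asm) AE_distr_iff) simp_all
  moreover have "AE \<omega> in gaussian (s 0). iter_maps T i \<omega> = s i / s 0 * \<omega>"
    using Suc by simp
  ultimately show ?case
    by eventually_elim (simp add: si)
qed

section \<open>Quantile functions\<close>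

lemma quantile_eqI:
  assumes "\<And>x. u \<le> cdf \<mu> x \<longleftrightarrow> a \<le> x"
  shows "quantile \<mu> u = a"
proof -
  have "{x. u \<le> cdf \<mu> x} = {a..}" using assms by auto
  then show ?thesis unfolding quantile_def by simp
qed

lemma quantile_le_iff:
  assumes "cdf_distribution M" "0 < u" "u < 1"
  shows "u \<le> cdf M x \<longleftrightarrow> quantile M u \<le> x"
proof -
  interpret cdf_distribution M by fact
  show ?thesis using pseudoinverse assms(2,3) unfolding quantile_def by blast
qed

lemma quantile_distr_scale:
  assumes M: "cdf_distribution M" and c: "0 < c" and u: "0 < u" "u < 1"
  shows "quantile (distr M borel (\<lambda>x. c * x)) u = c * quantile M u"
proof (rule quantile_eqI)
  interpret cdf_distribution M by fact
  fix x
  have "(\<lambda>y. c * y) -` {..x} = {..x / c}" using c by (auto simp: field_simps)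
  then have "cdf (distr M borel (\<lambda>x. c * x)) x = cdf M (x / c)"
    unfolding cdf_def by (subst measure_distr) auto
  then show "u \<le> cdf (distr M borel (\<lambda>x. c * x)) x \<longleftrightarrow> c * quantile M u \<le> x"
    using quantile_le_iff[OF M u, of "x / c"] c by (simp add: field_simps)
qed

lemma quantile_distr_zero:
  assumes "prob_space M" "0 < u" "u < 1"
  shows "quantile (distr M borel (\<lambda>x. 0 :: real)) u = 0"
proof (rule quantile_eqI)
  interpret prob_space M by fact
  fix x :: real
  have "cdf (distr M borel (\<lambda>x. 0)) x = (if 0 \<le> x then 1 else 0)"
    unfolding cdf_def by (subst measure_distr) (auto simp: prob_space[simplified])
  then show "u \<le> cdf (distr M borel (\<lambda>x. 0)) x \<longleftrightarrow> 0 \<le> x"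
    using assms by simp
qed

lemma quantile_gaussian:
  assumes "0 < \<sigma>" "0 < u" "u < 1"
  shows "quantile (gaussian \<sigma>) u = \<sigma> * quantile (gaussian 1) u"
  using quantile_distr_scale[OF cdf_distribution_gaussian[OF zero_less_one] assms] distr_gaussian_scale[of 1 \<sigma>] assms
  by simp

lemma quantile_distr_gaussian_scale:
  assumes "0 < u" "u < 1"
  shows "quantile (distr (gaussian 1) borel (\<lambda>x. c * x)) u = \<bar>c\<bar> * quantile (gaussian 1) u"
proof (cases "c = 0")
  case True
  then show ?thesis
    using quantile_distr_zero[OF prob_space_gaussian assms] by simp
next
  case False
  then have "distr (gaussian 1) borel (\<lambda>x. c * x) = gaussian \<bar>c\<bar>"
    using distr_gaussian_scale[of 1 c] by simp
  then show ?thesis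
    using quantile_gaussian[of "\<bar>c\<bar>"] False assms by simp
qed

lemma cdf_quantile:
  assumes M: "cdf_distribution M" and u: "0 < u" "u < 1"
    and atomless: "measure M {quantile M u} = 0"
  shows "cdf M (quantile M u) = u"
proof (rule antisym)
  interpret cdf_distribution M by fact
  have "isCont (cdf M) (quantile M u)"
    using atomless isCont_cdf by simp
  then have left_limit: "(cdf M \<longlongrightarrow> cdf M (quantile M u)) (at_left (quantile M u))"
    by (simp add: isCont_def filterlim_at_split)
  have "cdf M x \<le> u" if "x < quantile M u" for x
    using quantile_le_iff[OF M u, of x] that by linarith
  then have "eventually (\<lambda>x. cdf M x \<le> u) (at_left (quantile M u))"
    unfolding eventually_at_left_field by (intro exI[of _ "quantile M u - 1"]) auto
  with left_limit show "cdf M (quantile M u) \<le> u"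
    by (rule tendsto_le[OF _ tendsto_const, rotated]) simp
  show "u \<le> cdf M (quantile M u)"
    using quantile_le_iff[OF M u] by simp
qed

lemma borel_measurable_quantile_restrict:
  assumes "cdf_distribution M"
  shows "quantile M \<in> borel_measurable (restrict_space lborel {0<..<1})"
proof -
  interpret cdf_distribution M by fact
  have "quantile M \<in> borel_measurable (restrict_space borel {0<..<1})"
    unfolding quantile_def by (rule measurable_CI)
  moreover have "borel_measurable (restrict_space borel {0<..<1::real})
      = borel_measurable (restrict_space lborel {0<..<1})"
    by (rule measurable_cong_sets) (simp_all add: sets_restrict_space)
  ultimately show ?thesis by simp
qed

lemma borel_measurable_quantile:
  assumes "cdf_distribution M"
  shows "(\<lambda>u. indicator {0<..<1} u * quantile M u) \<in> borel_measurable borel"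
  using borel_measurable_quantile_restrict[OF assms]
  by (subst (asm) borel_measurable_restrict_space_iff) (auto cong: measurable_cong_sets)

lemma nn_integral_quantile:
  assumes M: "cdf_distribution M" and f: "f \<in> borel_measurable borel"
  shows "(\<integral>\<^sup>+ u. indicator {0<..<1} u * f (quantile M u) \<partial>lborel) = (\<integral>\<^sup>+ x. f x \<partial>M)"
proof -
  interpret cdf_distribution M by fact
  have "(\<integral>\<^sup>+ u. indicator {0<..<1} u * f (quantile M u) \<partial>lborel)
      = (\<integral>\<^sup>+ u. f (quantile M u) \<partial>restrict_space lborel {0<..<1})"
    by (subst nn_integral_restrict_space) (auto simp: mult.commute)
  also have "\<dots> = (\<integral>\<^sup>+ x. f x \<partial>distr (restrict_space lborel {0<..<1}) borel (quantile M))"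
    using borel_measurable_quantile_restrict[OF M] f by (simp add: nn_integral_distr)
  also have "distr (restrict_space lborel {0<..<1}) borel (quantile M) = M"
    using distr_I_eq_M unfolding quantile_def .
  finally show ?thesis .
qed

lemma nn_integral_quantile_square_finite:
  assumes "cdf_distribution M" "integrable M (\<lambda>x. x\<^sup>2)"
  shows "(\<integral>\<^sup>+ u. indicator {0<..<1} u * ennreal ((quantile M u)\<^sup>2) \<partial>lborel) < \<top>"
  using nn_integral_quantile[OF assms(1), of "\<lambda>x. ennreal (x\<^sup>2)"] assms(2)
  unfolding integrable_iff_bounded by simp

lemma AE_quantile_neq:
  assumes M: "cdf_distribution M" and atomless: "measure M {x} = 0"
  shows "AE u in lborel. u \<in> {0<..<1} \<longrightarrow> quantile M u \<noteq> x"
  using AE_lborel_singleton[of "cdf M x"]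
proof eventually_elim
  case (elim u)
  show ?case
    using cdf_quantile[OF M, of u] atomless elim by auto
qed

lemma AE_lborel_interval_obtain:
  fixes a b :: real
  assumes "AE x in lborel. x \<in> {a<..<b} \<longrightarrow> P x" and "a < b"
  obtains x where "x \<in> {a<..<b}" "P x"
proof (rule ccontr)
  assume "\<not> thesis"
  with assms(1) have "AE x in lborel. x \<notin> {a<..<b}"
    using that by (auto elim: eventually_mono)
  then have "{a<..<b} \<in> null_sets lborel"
    by (subst AE_iff_null_sets) (auto simp: greaterThanLessThan_borel)
  with assms(2) show False
    by (simp add: null_sets_def)
qed

section \<open>Curves with an integrable weak second derivative\<close>

text \<open>The condition imposed on each quantile curve \<open>t \<mapsto> quantile (\<mu> t) u\<close> in
  \<^const>\<open>spline_energy\<close>: \<open>f' 0 = v\<close> and \<open>f'' = a\<close> weakly on \<open>[0, 1]\<close>.\<close>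
definition has_weak_second_deriv :: "(real \<Rightarrow> real) \<Rightarrow> real \<Rightarrow> (real \<Rightarrow> real) \<Rightarrow> bool" where
  "has_weak_second_deriv f v a \<longleftrightarrow> set_integrable lborel {0..1} a \<and>
     (\<forall>t\<in>{0..1}. f t = f 0 + t * v + (LBINT s:{0..t}. (t - s) * a s))"

lemma tendsto_set_integral_centered_interval:
  fixes g :: "real \<Rightarrow> real"
  assumes g: "integrable lborel g"
  shows "((\<lambda>h. LBINT s:{t - h..t + h}. g s) \<longlongrightarrow> 0) (at_right 0)"
proof (rule tendsto_at_right_sequentially[OF zero_less_one])
  fix H :: "nat \<Rightarrow> real"
  assume H: "\<And>n. 0 < H n" "\<And>n. H n < 1" "decseq H" "H \<longlonglongrightarrow> 0"
  have [measurable]: "g \<in> borel_measurable lborel"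
    using g by (rule borel_measurable_integrable)
  define G where "G n s = indicator {t - H n..t + H n} s * g s" for n s
  have G_meas: "G n \<in> borel_measurable borel" for n
    unfolding G_def by measurable
  have "AE s in lborel. (\<lambda>n. G n s) \<longlonglongrightarrow> 0"
    using AE_lborel_singleton[of t]
  proof eventually_elim
    case (elim s)
    then have "eventually (\<lambda>n. H n < \<bar>s - t\<bar>) sequentially"
      using order_tendstoD(2)[OF H(4)] by simp
    then have "eventually (\<lambda>n. G n s = 0) sequentially"
      by eventually_elim (auto simp: G_def split: split_indicator)
    then show ?case
      by (rule tendsto_eventually)
  qed
  then have "(\<lambda>n. integral\<^sup>L lborel (G n)) \<longlonglongrightarrow> integral\<^sup>L lborel (\<lambda>s::real. 0)"
    using g by (intro Bochner_Integration.integral_dominated_convergence[where w = "\<lambda>s. norm (g s)"])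
      (auto simp: G_meas G_def split: split_indicator)
  then show "(\<lambda>n. LBINT s:{t - H n..t + H n}. g s) \<longlonglongrightarrow> 0"
    by (simp add: set_lebesgue_integral_def G_def[abs_def])
qed

lemma integrable_ramp_mult:
  fixes b :: "real \<Rightarrow> real"
  assumes b: "integrable lborel b" and x: "0 \<le> x"
  shows "integrable lborel (\<lambda>s. indicator {0..x} s * (x - s) * b s)"
proof (rule Bochner_Integration.integrable_bound[of _ "\<lambda>s. x * \<bar>b s\<bar>"])
  show "AE s in lborel. norm (indicator {0..x} s * (x - s) * b s) \<le> norm (x * \<bar>b s\<bar>)"
    using x by (intro AE_I2) (auto simp: abs_mult intro!: mult_right_mono split: split_indicator)
qed (use b in \<open>auto intro: borel_measurable_integrable\<close>)

lemma second_difference_taylor_remainder: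
  fixes b :: "real \<Rightarrow> real"
  assumes b: "integrable lborel b" and h: "0 < h" "h \<le> t"
  defines "R x \<equiv> LBINT s:{0..x}. (x - s) * b s"
  shows "\<bar>R (t + h) + R (t - h) - 2 * R t\<bar> \<le> h * (LBINT s:{t - h..t + h}. \<bar>b s\<bar>)"
proof -
  have [measurable]: "b \<in> borel_measurable lborel"
    using b by (rule borel_measurable_integrable)
  define k where "k x s = indicator {0..x} s * (x - s)" for x s :: real
  have R: "R x = (LBINT s. k x s * b s)" for x
    unfolding R_def k_def set_lebesgue_integral_def by (simp add: mult.assoc)
  have int: "integrable lborel (\<lambda>s. k x s * b s)" if "0 \<le> x" for x
    unfolding k_def using b that by (rule integrable_ramp_mult)
  have kernel: "\<bar>k (t + h) s + k (t - h) s - 2 * k t s\<bar> \<le> h * indicator {t - h..t + h} s" for s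
    using h by (auto simp: k_def split: split_indicator)
  let ?d = "\<lambda>s. k (t + h) s * b s + k (t - h) s * b s - 2 * (k t s * b s)"
  have "has_bochner_integral lborel ?d (R (t + h) + R (t - h) - 2 * R t)"
    unfolding R using int[of "t + h"] int[of "t - h"] int[of t] h
    by (intro has_bochner_integral_diff has_bochner_integral_add has_bochner_integral_mult_right
        has_bochner_integral_integrable) auto
  then have d: "integrable lborel ?d" "R (t + h) + R (t - h) - 2 * R t = (LBINT s. ?d s)"
    by (simp_all add: has_bochner_integral_iff)
  have "\<bar>R (t + h) + R (t - h) - 2 * R t\<bar> \<le> (LBINT s. \<bar>?d s\<bar>)"
    unfolding d(2) by (rule integral_abs_bound)
  also have "\<dots> \<le> (LBINT s. h * (indicator {t - h..t + h} s * \<bar>b s\<bar>))"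
  proof (rule integral_mono)
    show "integrable lborel (\<lambda>s. \<bar>?d s\<bar>)"
      using d(1) by (rule integrable_abs)
    show "integrable lborel (\<lambda>s. h * (indicator {t - h..t + h} s * \<bar>b s\<bar>))"
      using integrable_mult_indicator[OF _ integrable_abs[OF b], of "{t - h..t + h}"] by simp
    fix s
    have "?d s = (k (t + h) s + k (t - h) s - 2 * k t s) * b s"
      by (simp add: algebra_simps)
    then have "\<bar>?d s\<bar> = \<bar>k (t + h) s + k (t - h) s - 2 * k t s\<bar> * \<bar>b s\<bar>"
      by (simp add: abs_mult)
    also have "\<dots> \<le> h * indicator {t - h..t + h} s * \<bar>b s\<bar>"
      by (rule mult_right_mono[OF kernel]) simp
    finally show "\<bar>?d s\<bar> \<le> h * (indicator {t - h..t + h} s * \<bar>b s\<bar>)"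
      by simp
  qed
  also have "\<dots> = h * (LBINT s:{t - h..t + h}. \<bar>b s\<bar>)"
    by (simp add: set_lebesgue_integral_def)
  finally show ?thesis .
qed

lemma second_difference_quotient_tendsto_zero:
  fixes f a :: "real \<Rightarrow> real"
  assumes f: "has_weak_second_deriv f v a" and t: "0 < t" "t < 1"
  shows "((\<lambda>h. (f (t + h) + f (t - h) - 2 * f t) / h) \<longlongrightarrow> 0) (at_right 0)"
proof (rule Lim_null_comparison)
  define b where "b s = indicator {0..1} s * a s" for s
  have b: "integrable lborel b"
    using f unfolding has_weak_second_deriv_def set_integrable_def b_def[abs_def] by simp
  define R where "R x = (LBINT s:{0..x}. (x - s) * b s)" for x
  have f_R: "f x = f 0 + x * v + R x" if "x \<in> {0..1}" for x
  proof -
    have "f x = f 0 + x * v + (LBINT s:{0..x}. (x - s) * a s)"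
      using f that unfolding has_weak_second_deriv_def by blast
    moreover have "(LBINT s:{0..x}. (x - s) * a s) = R x"
      unfolding R_def b_def using that by (intro set_lebesgue_integral_cong) auto
    ultimately show ?thesis by simp
  qed
  have "norm ((f (t + h) + f (t - h) - 2 * f t) / h) \<le> (LBINT s:{t - h..t + h}. \<bar>b s\<bar>)"
    if h: "0 < h" "h < min t (1 - t)" for h
  proof -
    have "f (t + h) + f (t - h) - 2 * f t = R (t + h) + R (t - h) - 2 * R t"
      using f_R[of "t + h"] f_R[of "t - h"] f_R[of t] t h by (simp add: algebra_simps)
    also have "\<bar>\<dots>\<bar> \<le> h * (LBINT s:{t - h..t + h}. \<bar>b s\<bar>)"
      unfolding R_def using b h by (intro second_difference_taylor_remainder) auto
    finally show ?thesis
      using h by (simp add: divide_le_eq mult.commute)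
  qed
  then show "eventually (\<lambda>h. norm ((f (t + h) + f (t - h) - 2 * f t) / h)
      \<le> (LBINT s:{t - h..t + h}. \<bar>b s\<bar>)) (at_right 0)"
    unfolding eventually_at_right_field using t by (intro exI[of _ "min t (1 - t)"]) auto
  show "((\<lambda>h. LBINT s:{t - h..t + h}. \<bar>b s\<bar>) \<longlongrightarrow> 0) (at_right 0)"
    using b by (intro tendsto_set_integral_centered_interval) simp
qed

lemma DERIV_one_sided_quotients:
  assumes "(g has_real_derivative g') (at t0)"
  shows "((\<lambda>h. (g (t0 + h) - g t0) / h) \<longlongrightarrow> g') (at_right 0)"
    and "((\<lambda>h. (g (t0 - h) - g t0) / h) \<longlongrightarrow> - g') (at_right 0)"
proof -
  have at0: "((\<lambda>h. (g (t0 + h) - g t0) / h) \<longlongrightarrow> g') (at 0)"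
    using assms by (simp add: DERIV_def)
  then show "((\<lambda>h. (g (t0 + h) - g t0) / h) \<longlongrightarrow> g') (at_right 0)"
    by (simp add: filterlim_at_split)
  from at0 have "((\<lambda>h. (g (t0 + h) - g t0) / h) \<longlongrightarrow> g') (at_left 0)"
    by (simp add: filterlim_at_split)
  then have "((\<lambda>h. (g (t0 + - h) - g t0) / - h) \<longlongrightarrow> g') (at_right 0)"
    by (simp add: at_left_minus filterlim_filtermap)
  from tendsto_minus[OF this] show "((\<lambda>h. (g (t0 - h) - g t0) / h) \<longlongrightarrow> - g') (at_right 0)"
    by simp
qed

text \<open>A curve with an integrable weak second derivative is \<open>C\<^sup>1\<close>, so it cannot have the corner
  of \<open>\<bar>g\<bar>\<close> at a simple zero of \<open>g\<close>: the symmetric second difference quotient of \<open>\<bar>g\<bar> c\<close>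
  tends to \<open>2 \<bar>g'\<bar> c\<close> instead of \<open>0\<close>.\<close>
lemma has_weak_second_deriv_abs_simple_zero:
  fixes f g a :: "real \<Rightarrow> real"
  assumes f: "has_weak_second_deriv f v a" and t0: "0 < t0" "t0 < 1" and r: "0 < r"
    and f_abs: "\<forall>t. \<bar>t - t0\<bar> < r \<longrightarrow> f t = \<bar>g t\<bar> * c"
    and g: "(g has_real_derivative g') (at t0)" "g t0 = 0" "g' \<noteq> 0"
  shows "c = 0"
proof -
  note quotients = DERIV_one_sided_quotients[OF g(1), unfolded g(2) diff_zero]
  have "((\<lambda>h. (\<bar>g (t0 + h) / h\<bar> + \<bar>g (t0 - h) / h\<bar>) * c) \<longlongrightarrow> (\<bar>g'\<bar> + \<bar>- g'\<bar>) * c) (at_right 0)"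
    by (intro tendsto_intros quotients)
  moreover have "(\<bar>g (t0 + h) / h\<bar> + \<bar>g (t0 - h) / h\<bar>) * c
      = (f (t0 + h) + f (t0 - h) - 2 * f t0) / h" if h: "0 < h" "h < r" for h
  proof -
    have "f (t0 + h) = \<bar>g (t0 + h)\<bar> * c" "f (t0 - h) = \<bar>g (t0 - h)\<bar> * c" "f t0 = 0"
      using f_abs h r g(2) by auto
    then have "(f (t0 + h) + f (t0 - h) - 2 * f t0) / h = (\<bar>g (t0 + h)\<bar> * c + \<bar>g (t0 - h)\<bar> * c) / h"
      by simp
    also have "\<dots> = (\<bar>g (t0 + h) / h\<bar> + \<bar>g (t0 - h) / h\<bar>) * c"
      using h by (simp add: add_divide_distrib distrib_right)
    finally show ?thesis ..
  qed
  then have "eventually (\<lambda>h. (\<bar>g (t0 + h) / h\<bar> + \<bar>g (t0 - h) / h\<bar>) * c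
      = (f (t0 + h) + f (t0 - h) - 2 * f t0) / h) (at_right 0)"
    unfolding eventually_at_right_field using r by (intro exI[of _ r]) auto
  ultimately have "((\<lambda>h. (f (t0 + h) + f (t0 - h) - 2 * f t0) / h) \<longlongrightarrow> (\<bar>g'\<bar> + \<bar>- g'\<bar>) * c)
      (at_right 0)"
    by (rule Lim_transform_eventually)
  moreover have "((\<lambda>h. (f (t0 + h) + f (t0 - h) - 2 * f t0) / h) \<longlongrightarrow> 0) (at_right 0)"
    using f t0 by (rule second_difference_quotient_tendsto_zero)
  ultimately have "(\<bar>g'\<bar> + \<bar>- g'\<bar>) * c = 0"
    by (rule tendsto_unique[OF trivial_limit_at_right_real])
  with g(3) show ?thesis by simp
qed

section \<open>Energy of curves of Gaussians\<close>

lemma nn_integral_lborel_prod_mult: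
  fixes f g :: "real \<Rightarrow> ennreal"
  assumes [measurable]: "f \<in> borel_measurable borel" "g \<in> borel_measurable borel"
  shows "(\<integral>\<^sup>+ p. f (fst p) * g (snd p) \<partial>lborel) = (\<integral>\<^sup>+ x. f x \<partial>lborel) * (\<integral>\<^sup>+ y. g y \<partial>lborel)"
proof -
  have "(\<integral>\<^sup>+ p. f (fst p) * g (snd p) \<partial>lborel) = (\<integral>\<^sup>+ p. f (fst p) * g (snd p) \<partial>(lborel \<Otimes>\<^sub>M lborel))"
    by (simp only: lborel_prod)
  also have "\<dots> = (\<integral>\<^sup>+ x. \<integral>\<^sup>+ y. f x * g y \<partial>lborel \<partial>lborel)"
    by (subst lborel.nn_integral_fst[symmetric]) auto
  also have "\<dots> = (\<integral>\<^sup>+ x. f x * (\<integral>\<^sup>+ y. g y \<partial>lborel) \<partial>lborel)"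
    by (simp add: nn_integral_cmult)
  also have "\<dots> = (\<integral>\<^sup>+ x. f x \<partial>lborel) * (\<integral>\<^sup>+ y. g y \<partial>lborel)"
    by (simp add: nn_integral_multc)
  finally show ?thesis .
qed

lemma spline_energy_finite_imp_weak_second_deriv:
  assumes "spline_energy \<mu> < \<top>"
  obtains A V where
    "AE u in lborel. u \<in> {0<..<1} \<longrightarrow> has_weak_second_deriv (\<lambda>t. quantile (\<mu> t) u) (V u) (\<lambda>s. A s u)"
proof (rule ccontr)
  assume "\<not> thesis"
  then have "spline_energy \<mu> = Inf {}"
    unfolding spline_energy_def using that[unfolded has_weak_second_deriv_def]
    by (intro arg_cong[where f = Inf]) blast
  with assms show False by simp
qed

lemma spline_energy_finite_obtain_quantile_curve:
  assumes "spline_energy \<mu> < \<top>" and "AE u in lborel. u \<in> {0<..<1} \<longrightarrow> P u"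
  obtains u v a where "u \<in> {0<..<1}" "P u" "has_weak_second_deriv (\<lambda>t. quantile (\<mu> t) u) v a"
proof -
  obtain A V where
    "AE u in lborel. u \<in> {0<..<1} \<longrightarrow> has_weak_second_deriv (\<lambda>t. quantile (\<mu> t) u) (V u) (\<lambda>s. A s u)"
    using assms(1) by (rule spline_energy_finite_imp_weak_second_deriv)
  with assms(2) have "AE u in lborel. u \<in> {0<..<1} \<longrightarrow>
      P u \<and> has_weak_second_deriv (\<lambda>t. quantile (\<mu> t) u) (V u) (\<lambda>s. A s u)"
    by eventually_elim simp
  then obtain u where "u \<in> {0<..<1}" "P u"
    "has_weak_second_deriv (\<lambda>t. quantile (\<mu> t) u) (V u) (\<lambda>s. A s u)"
    by (rule AE_lborel_interval_obtain) auto
  then show thesis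
    by (rule that)
qed

lemma spline_energy_le:
  assumes "(\<lambda>p. A (fst p) (snd p)) \<in> borel_measurable lborel"
    and "AE u in lborel. u \<in> {0<..<1} \<longrightarrow> has_weak_second_deriv (\<lambda>t. quantile (\<mu> t) u) (V u) (\<lambda>s. A s u)"
  shows "spline_energy \<mu>
    \<le> (\<integral>\<^sup>+ p. indicator ({0..1} \<times> {0<..<1}) p * ennreal ((A (fst p) (snd p))\<^sup>2) \<partial>lborel)"
  unfolding spline_energy_def
  by (intro Inf_lower CollectI exI[of _ A] conjI refl exI[of _ V] assms(1)
      assms(2)[unfolded has_weak_second_deriv_def])

lemma has_weak_second_deriv_quantile_gaussian:
  assumes pos: "\<forall>t\<in>{0..1}. 0 < \<sigma> t" and \<sigma>: "has_weak_second_deriv \<sigma> v \<sigma>''" and u: "u \<in> {0<..<1}"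
  shows "has_weak_second_deriv (\<lambda>t. quantile (gaussian (\<sigma> t)) u)
    (v * quantile (gaussian 1) u) (\<lambda>s. \<sigma>'' s * quantile (gaussian 1) u)"
  unfolding has_weak_second_deriv_def
proof (intro conjI ballI)
  let ?q = "quantile (gaussian 1) u"
  show "set_integrable lborel {0..1} (\<lambda>s. \<sigma>'' s * ?q)"
    using \<sigma> unfolding has_weak_second_deriv_def by simp
  fix t :: real assume t: "t \<in> {0..1}"
  have "(\<lambda>s. (t - s) * (\<sigma>'' s * ?q)) = (\<lambda>s. ?q * ((t - s) * \<sigma>'' s))"
    by (simp add: fun_eq_iff ac_simps)
  then have remainder: "(LBINT s:{0..t}. (t - s) * (\<sigma>'' s * ?q)) = ?q * (LBINT s:{0..t}. (t - s) * \<sigma>'' s)"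
    by simp
  have quantile_\<sigma>: "quantile (gaussian (\<sigma> t')) u = \<sigma> t' * ?q" if "t' \<in> {0..1}" for t'
    using quantile_gaussian[of "\<sigma> t'" u] pos that u by simp
  have "\<sigma> t = \<sigma> 0 + t * v + (LBINT s:{0..t}. (t - s) * \<sigma>'' s)"
    using \<sigma> t unfolding has_weak_second_deriv_def by blast
  then show "quantile (gaussian (\<sigma> t)) u
      = quantile (gaussian (\<sigma> 0)) u + t * (v * ?q) + (LBINT s:{0..t}. (t - s) * (\<sigma>'' s * ?q))"
    unfolding quantile_\<sigma>[OF t] quantile_\<sigma>[of 0, simplified] remainder
    by (simp add: algebra_simps)
qed

text \<open>The energy splits into \<open>\<integral>\<^sub>0\<^sup>1 \<sigma>''\<^sup>2\<close> times the second moment of the standard Gaussian.\<close>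
lemma spline_energy_gaussian_curve_finite:
  assumes pos: "\<forall>t\<in>{0..1}. 0 < \<sigma> t" and \<sigma>: "has_weak_second_deriv \<sigma> v \<sigma>''"
    and [measurable]: "\<sigma>'' \<in> borel_measurable borel" and cont: "continuous_on {0..1} \<sigma>''"
  shows "spline_energy (\<lambda>t. gaussian (\<sigma> t)) < \<top>"
proof -
  define q where "q u = indicator {0<..<1} u * quantile (gaussian 1) u" for u
  have [measurable]: "q \<in> borel_measurable borel"
    unfolding q_def by (rule borel_measurable_quantile[OF cdf_distribution_gaussian]) simp
  have "(\<lambda>p. \<sigma>'' (fst p) * q (snd p)) \<in> borel_measurable (lborel \<Otimes>\<^sub>M lborel)"
    by measurable
  then have "spline_energy (\<lambda>t. gaussian (\<sigma> t))
      \<le> (\<integral>\<^sup>+ p. indicator ({0..1} \<times> {0<..<1}) p * ennreal ((\<sigma>'' (fst p) * q (snd p))\<^sup>2) \<partial>lborel)"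
    using has_weak_second_deriv_quantile_gaussian[OF pos \<sigma>]
    by (intro spline_energy_le[where A = "\<lambda>s u. \<sigma>'' s * q u" and V = "\<lambda>u. v * q u"])
       (auto simp: lborel_prod q_def intro!: AE_I2)
  also have "\<dots> = (\<integral>\<^sup>+ s. indicator {0..1} s * ennreal ((\<sigma>'' s)\<^sup>2) \<partial>lborel)
      * (\<integral>\<^sup>+ u. indicator {0<..<1} u * ennreal ((q u)\<^sup>2) \<partial>lborel)"
    by (subst nn_integral_lborel_prod_mult[symmetric])
       (auto intro!: nn_integral_cong simp: power_mult_distrib ennreal_mult split: split_indicator)
  also have "\<dots> < \<top>"
  proof -
    have "set_integrable lborel {0..1} (\<lambda>s. (\<sigma>'' s)\<^sup>2)"
      using cont by (intro borel_integrable_atLeastAtMost' continuous_intros)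
    then have "(\<integral>\<^sup>+ s. indicator {0..1} s * ennreal ((\<sigma>'' s)\<^sup>2) \<partial>lborel) < \<top>"
      unfolding set_integrable_def integrable_iff_bounded
      by (auto simp: indicator_mult_ennreal mult.commute)
    moreover have "(\<integral>\<^sup>+ u. indicator {0<..<1} u * ennreal ((q u)\<^sup>2) \<partial>lborel)
        = (\<integral>\<^sup>+ u. indicator {0<..<1} u * ennreal ((quantile (gaussian 1) u)\<^sup>2) \<partial>lborel)"
      by (auto intro!: nn_integral_cong simp: q_def split: split_indicator)
    ultimately show ?thesis
      using nn_integral_quantile_square_finite[OF cdf_distribution_gaussian integrable_gaussian_square]
      by (simp add: ennreal_mult_less_top)
  qed
  finally show ?thesis .
qed

section \<open>Natural cubic splines with knots \<open>0, 1/3, 2/3, 1\<close>\<close>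

lemma has_real_derivative_unique_Icc:
  fixes f :: "real \<Rightarrow> real"
  assumes "l < r" "x \<in> {l..r}"
    and "(f has_real_derivative A) (at x within {l..r})" "(f has_real_derivative B) (at x within {l..r})"
  shows "A = B"
  using vector_derivative_unique_within_closed_interval[of l r x f A B] assms
  by (simp add: has_real_derivative_iff_has_vector_derivative)

lemma derivatives_of_cubic_piece:
  fixes f f' f'' :: "real \<Rightarrow> real"
  assumes lr: "l < r" "{l..r} \<subseteq> S"
    and D: "\<forall>t\<in>S. (f has_real_derivative f' t) (at t within S) \<and> (f' has_real_derivative f'' t) (at t within S)"
    and cubic: "\<forall>t\<in>{l..r}. f t = a + b * t + c * t ^ 2 + d * t ^ 3"
    and t: "t \<in> {l..r}"
  shows "f' t = b + 2 * c * t + 3 * d * t ^ 2 \<and> f'' t = 2 * c + 6 * d * t"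
proof -
  have f': "f' x = b + 2 * c * x + 3 * d * x ^ 2" if x: "x \<in> {l..r}" for x
  proof (rule has_real_derivative_unique_Icc[OF lr(1) x])
    have "(f has_real_derivative f' x) (at x within {l..r})"
      using D lr(2) x by (meson has_field_derivative_subset subsetD)
    then show "((\<lambda>t. a + b * t + c * t ^ 2 + d * t ^ 3) has_real_derivative f' x) (at x within {l..r})"
      by (rule has_field_derivative_transform_within[where d = 1]) (use x cubic in auto)
    show "((\<lambda>t. a + b * t + c * t ^ 2 + d * t ^ 3) has_real_derivative b + 2 * c * x + 3 * d * x ^ 2)
        (at x within {l..r})"
      by (auto intro!: derivative_eq_intros simp: power2_eq_square)
  qed
  have "f'' t = 2 * c + 6 * d * t"
  proof (rule has_real_derivative_unique_Icc[OF lr(1) t])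
    have "(f' has_real_derivative f'' t) (at t within {l..r})"
      using D lr(2) t by (meson has_field_derivative_subset subsetD)
    then show "((\<lambda>x. b + 2 * c * x + 3 * d * x ^ 2) has_real_derivative f'' t) (at t within {l..r})"
      by (rule has_field_derivative_transform_within[where d = 1]) (use t f' in auto)
    show "((\<lambda>x. b + 2 * c * x + 3 * d * x ^ 2) has_real_derivative 2 * c + 6 * d * t) (at t within {l..r})"
      by (auto intro!: derivative_eq_intros simp: power2_eq_square)
  qed
  with f'[OF t] show ?thesis by blast
qed

definition thirds_spline_middle :: "real \<Rightarrow> real \<Rightarrow> real \<Rightarrow> real \<Rightarrow> real \<Rightarrow> real" where
  "thirds_spline_middle y0 y1 y2 y3 t =
     (8 * y0 - 8 * y1 + 7 * y2 - 2 * y3) / 5 + (- 46 * y0 + 96 * y1 - 69 * y2 + 19 * y3) / 5 * t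
     + (81 * y0 - 216 * y1 + 189 * y2 - 54 * y3) / 5 * t ^ 2 + (- 9 * y0 + 27 * y1 - 27 * y2 + 9 * y3) * t ^ 3"

lemma thirds_spline_middle_coefficients:
  fixes a1 b1 c1 d1 a2 b2 c2 d2 a3 b3 c3 d3 y0 y1 y2 y3 :: real
  assumes "a1 = y0"
    and "a1 + b1 * (1/3) + c1 * (1/3)\<^sup>2 + d1 * (1/3)^3 = y1"
    and "a2 + b2 * (1/3) + c2 * (1/3)\<^sup>2 + d2 * (1/3)^3 = y1"
    and "a2 + b2 * (2/3) + c2 * (2/3)\<^sup>2 + d2 * (2/3)^3 = y2"
    and "a3 + b3 * (2/3) + c3 * (2/3)\<^sup>2 + d3 * (2/3)^3 = y2"
    and "a3 + b3 + c3 + d3 = y3"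
    and "b1 + 2 * c1 * (1/3) + 3 * d1 * (1/3)\<^sup>2 = b2 + 2 * c2 * (1/3) + 3 * d2 * (1/3)\<^sup>2"
    and "b2 + 2 * c2 * (2/3) + 3 * d2 * (2/3)\<^sup>2 = b3 + 2 * c3 * (2/3) + 3 * d3 * (2/3)\<^sup>2"
    and "2 * c1 + 6 * d1 * (1/3) = 2 * c2 + 6 * d2 * (1/3)"
    and "2 * c2 + 6 * d2 * (2/3) = 2 * c3 + 6 * d3 * (2/3)"
    and "c1 = 0" and "2 * c3 + 6 * d3 = 0"
  shows "a2 + b2 * t + c2 * t\<^sup>2 + d2 * t ^ 3 = thirds_spline_middle y0 y1 y2 y3 t"
proof -
  have "a2 = (8 * y0 - 8 * y1 + 7 * y2 - 2 * y3) / 5 \<and> b2 = (- 46 * y0 + 96 * y1 - 69 * y2 + 19 * y3) / 5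
      \<and> c2 = (81 * y0 - 216 * y1 + 189 * y2 - 54 * y3) / 5 \<and> d2 = - 9 * y0 + 27 * y1 - 27 * y2 + 9 * y3"
    using assms by (simp add: power2_eq_square power3_eq_cube)
  then show ?thesis
    by (elim conjE) (simp (no_asm_simp) add: thirds_spline_middle_def)
qed

lemma nat_cubic_spline_thirds_middle:
  assumes spline: "nat_cubic_spline (\<lambda>i. real i / 3) 3 y f" and t: "t \<in> {1/3..2/3}"
  shows "f t = thirds_spline_middle (y 0) (y 1) (y 2) (y 3) t"
proof -
  have knots: "\<forall>i\<le>3. f (real i / 3) = y i"
    and pieces: "\<forall>i\<in>{1..3}. \<exists>a b c d. \<forall>t\<in>{real (i - 1) / 3..real i / 3}.
        f t = a + b * t + c * t ^ 2 + d * t ^ 3"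
    and "\<exists>f' f''. (\<forall>t\<in>{0..1}. (f has_real_derivative f' t) (at t within {0..1}) \<and>
        (f' has_real_derivative f'' t) (at t within {0..1})) \<and>
        continuous_on {0..1} f'' \<and> f'' 0 = 0 \<and> f'' 1 = 0"
    using spline unfolding nat_cubic_spline_def by auto
  then obtain f' f'' where D: "\<forall>t\<in>{0..1}. (f has_real_derivative f' t) (at t within {0..1}) \<and>
        (f' has_real_derivative f'' t) (at t within {0..1})" and natural: "f'' 0 = 0" "f'' 1 = 0"
    by blast
  obtain a1 b1 c1 d1 where P1: "\<forall>t\<in>{0..1/3}. f t = a1 + b1 * t + c1 * t ^ 2 + d1 * t ^ 3"
    using pieces[rule_format, of 1] by auto
  obtain a2 b2 c2 d2 where P2: "\<forall>t\<in>{1/3..2/3}. f t = a2 + b2 * t + c2 * t ^ 2 + d2 * t ^ 3"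
    using pieces[rule_format, of 2] by auto
  obtain a3 b3 c3 d3 where P3: "\<forall>t\<in>{2/3..1}. f t = a3 + b3 * t + c3 * t ^ 2 + d3 * t ^ 3"
    using pieces[rule_format, of 3] by auto
  note piece = derivatives_of_cubic_piece[OF _ _ D]
  have "a1 = y 0" "a1 + b1 * (1/3) + c1 * (1/3)\<^sup>2 + d1 * (1/3)^3 = y 1"
    "a2 + b2 * (1/3) + c2 * (1/3)\<^sup>2 + d2 * (1/3)^3 = y 1"
    "a2 + b2 * (2/3) + c2 * (2/3)\<^sup>2 + d2 * (2/3)^3 = y 2"
    "a3 + b3 * (2/3) + c3 * (2/3)\<^sup>2 + d3 * (2/3)^3 = y 2" "a3 + b3 + c3 + d3 = y 3"
    using P1[rule_format, of 0] P1[rule_format, of "1/3"] P2[rule_format, of "1/3"]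
      P2[rule_format, of "2/3"] P3[rule_format, of "2/3"] P3[rule_format, of 1]
      knots[rule_format, of 0] knots[rule_format, of 1] knots[rule_format, of 2] knots[rule_format, of 3]
    by simp_all
  moreover have "c1 = 0" "2 * c3 + 6 * d3 = 0"
    using piece[OF _ _ P1, of 0] piece[OF _ _ P3, of 1] natural by simp_all
  moreover have "f' (1/3) = b1 + 2 * c1 * (1/3) + 3 * d1 * (1/3)\<^sup>2 \<and> f'' (1/3) = 2 * c1 + 6 * d1 * (1/3)"
    "f' (1/3) = b2 + 2 * c2 * (1/3) + 3 * d2 * (1/3)\<^sup>2 \<and> f'' (1/3) = 2 * c2 + 6 * d2 * (1/3)"
    "f' (2/3) = b2 + 2 * c2 * (2/3) + 3 * d2 * (2/3)\<^sup>2 \<and> f'' (2/3) = 2 * c2 + 6 * d2 * (2/3)"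
    "f' (2/3) = b3 + 2 * c3 * (2/3) + 3 * d3 * (2/3)\<^sup>2 \<and> f'' (2/3) = 2 * c3 + 6 * d3 * (2/3)"
    by (rule piece[OF _ _ P1] piece[OF _ _ P2] piece[OF _ _ P3]; simp)+
  ultimately have "a2 + b2 * t + c2 * t\<^sup>2 + d2 * t ^ 3 = thirds_spline_middle (y 0) (y 1) (y 2) (y 3) t"
    by (intro thirds_spline_middle_coefficients) auto
  with P2 t show ?thesis by auto
qed

text \<open>For Gaussian data the Monge maps are linear, so every path of the transport spline is
  the spline of the standard deviations, scaled by the starting point.\<close>
lemma transport_spline_gaussian_thirds_middle:
  assumes pos: "\<forall>i\<le>3. 0 < s i"
    and TS: "is_transport_spline (\<lambda>i. real i / 3) 3 (\<lambda>i. gaussian (s i)) \<mu>"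
    and t: "t \<in> {1/3..2/3}"
  shows "\<mu> t = distr (gaussian 1) borel (\<lambda>x. thirds_spline_middle (s 0) (s 1) (s 2) (s 3) t * x)"
proof -
  obtain T Y where monge: "\<forall>i\<in>{1..3}. monge_map (gaussian (s (i - 1))) (gaussian (s i)) (T i)"
    and spline: "\<forall>\<omega>. nat_cubic_spline (\<lambda>i. real i / 3) 3 (\<lambda>i. iter_maps T i \<omega>) (\<lambda>t. Y t \<omega>)"
    and law: "\<forall>t\<in>{0..1}. \<mu> t = distr (gaussian (s 0)) borel (Y t)"
    using TS unfolding is_transport_spline_def by blast
  define c where "c = thirds_spline_middle (s 0) (s 1) (s 2) (s 3) t"
  have Y: "Y t \<omega> = thirds_spline_middle (iter_maps T 0 \<omega>) (iter_maps T 1 \<omega>) (iter_maps T 2 \<omega>)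
      (iter_maps T 3 \<omega>) t" for \<omega>
    using nat_cubic_spline_thirds_middle[OF spline[rule_format] t] .
  have T_meas: "T i \<in> borel_measurable borel" if "i \<in> {1..3}" for i
    using monge that unfolding monge_map_def by (auto simp: measurable_def)
  have [measurable]: "T 1 \<in> borel_measurable borel" "T 2 \<in> borel_measurable borel"
    "T 3 \<in> borel_measurable borel"
    by (auto intro: T_meas)
  have Y_paths: "Y t = (\<lambda>\<omega>. thirds_spline_middle \<omega> (T 1 \<omega>) (T 2 (T 1 \<omega>)) (T 3 (T 2 (T 1 \<omega>))) t)"
    by (simp add: Y fun_eq_iff numeral_eq_Suc)
  have [measurable]: "Y t \<in> borel_measurable borel"
    unfolding Y_paths thirds_spline_middle_def by measurable
  have "AE \<omega> in gaussian (s 0). \<forall>i\<in>{1, 2, 3}. iter_maps T i \<omega> = s i / s 0 * \<omega>"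
    by (intro eventually_ball_finite ballI AE_iter_maps_monge_gaussian[OF pos monge]) auto
  then have "AE \<omega> in gaussian (s 0). Y t \<omega> = c / s 0 * \<omega>"
  proof eventually_elim
    case (elim \<omega>)
    then have "Y t \<omega> = thirds_spline_middle \<omega> (s 1 / s 0 * \<omega>) (s 2 / s 0 * \<omega>) (s 3 / s 0 * \<omega>) t"
      by (simp add: Y)
    also have "\<dots> = c / s 0 * \<omega>"
      using pos[rule_format, of 0] by (simp add: c_def thirds_spline_middle_def field_simps)
    finally show ?case .
  qed
  then have "\<mu> t = distr (gaussian (s 0)) borel (\<lambda>\<omega>. c / s 0 * \<omega>)"
    using law t by (auto intro!: distr_cong_AE)
  also have "gaussian (s 0) = distr (gaussian 1) borel (\<lambda>x. s 0 * x)"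
    using distr_gaussian_scale[of 1 "s 0"] pos[rule_format, of 0] by simp
  finally show ?thesis
    using pos[rule_format, of 0] by (simp add: distr_distr comp_def c_def)
qed

section \<open>The counterexample\<close>

lemma thirds_spline_middle_symmetric:
  "thirds_spline_middle 1 \<delta> \<delta> 1 t = (6 - \<delta>) / 5 - 27 / 5 * (1 - \<delta>) * t * (1 - t)"
  unfolding thirds_spline_middle_def by (simp add: power2_eq_square power3_eq_cube field_simps)

lemma thirds_spline_middle_simple_zero:
  assumes "0 < \<delta>" "\<delta> < 3 / 23"
  obtains t0 where "1/3 < t0" "t0 < 1/2" "thirds_spline_middle 1 \<delta> \<delta> 1 t0 = 0"
    "(thirds_spline_middle 1 \<delta> \<delta> 1 has_real_derivative 27 / 5 * (1 - \<delta>) * (2 * t0 - 1)) (at t0)"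
proof -
  let ?S = "thirds_spline_middle 1 \<delta> \<delta> 1"
  have S: "?S = (\<lambda>t. (6 - \<delta>) / 5 - 27 / 5 * (1 - \<delta>) * t * (1 - t))"
    by (simp add: fun_eq_iff thirds_spline_middle_symmetric)
  have ends: "?S (1/3) = \<delta>" "?S (1/2) = (23 * \<delta> - 3) / 20"
    unfolding S by (simp_all add: field_simps)
  with assms have "\<exists>t0\<ge>1/3. t0 \<le> 1/2 \<and> ?S t0 = 0"
    by (intro IVT2') (auto simp: S intro!: continuous_intros)
  then obtain t0 where t0: "1/3 \<le> t0" "t0 \<le> 1/2" "?S t0 = 0"
    by blast
  moreover have "t0 \<noteq> 1/3" "t0 \<noteq> 1/2"
    using t0(3) ends assms by fastforce+
  ultimately have "1/3 < t0" "t0 < 1/2"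
    by auto
  moreover have "(?S has_real_derivative 27 / 5 * (1 - \<delta>) * (2 * t0 - 1)) (at t0)"
    unfolding S by (auto intro!: derivative_eq_intros simp: field_simps)
  ultimately show thesis
    using t0(3) that by blast
qed

lemma transport_spline_counterexample_quantile:
  assumes TS: "is_transport_spline (\<lambda>i. real i / 3) 3
      (\<lambda>i. if i = 1 \<or> i = 2 then gaussian \<delta> else gaussian 1) \<mu>"
    and \<delta>: "0 < \<delta>" and t: "t \<in> {1/3..2/3}" and u: "u \<in> {0<..<1}"
  shows "quantile (\<mu> t) u = \<bar>thirds_spline_middle 1 \<delta> \<delta> 1 t\<bar> * quantile (gaussian 1) u"
proof -
  have data: "(\<lambda>i::nat. if i = 1 \<or> i = 2 then gaussian \<delta> else gaussian 1)
      = (\<lambda>i. gaussian (if i = 1 \<or> i = 2 then \<delta> else 1))"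
    by auto
  have "\<mu> t = distr (gaussian 1) borel (\<lambda>x. thirds_spline_middle 1 \<delta> \<delta> 1 t * x)"
    using transport_spline_gaussian_thirds_middle[of "\<lambda>i. if i = 1 \<or> i = 2 then \<delta> else 1" \<mu> t]
      TS[unfolded data] \<delta> t by simp
  with u show ?thesis
    using quantile_distr_gaussian_scale by simp
qed

text \<open>A positive interpolation of the standard deviations \<open>1, \<delta>, \<delta>, 1\<close> at the knots.\<close>
definition interpolating_scale :: "real \<Rightarrow> real \<Rightarrow> real" where
  "interpolating_scale \<delta> t = \<delta> + (1 - \<delta>) * (1 - 9/2 * t * (1 - t))\<^sup>2"

lemma has_weak_second_deriv_interpolating_scale:
  "has_weak_second_deriv (interpolating_scale \<delta>) (- 9 * (1 - \<delta>))
     (\<lambda>s. (1 - \<delta>) * (117/2 - 243 * s + 243 * s\<^sup>2))"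
  unfolding has_weak_second_deriv_def
proof (intro conjI ballI)
  let ?\<sigma>'' = "\<lambda>s. (1 - \<delta>) * (117/2 - 243 * s + 243 * s\<^sup>2)"
  show "set_integrable lborel {0..1} ?\<sigma>''"
    by (intro borel_integrable_atLeastAtMost' continuous_intros)
  fix t :: real assume t: "t \<in> {0..1}"
  define F where "F s = (1 - \<delta>) * ((t - s) * (117/2 * s - 243/2 * s\<^sup>2 + 81 * s ^ 3)
      + (117/4 * s\<^sup>2 - 81/2 * s ^ 3 + 81/4 * s ^ 4))" for s
  have "(LBINT s:{0..t}. (t - s) * ?\<sigma>'' s) = F t - F 0"
    unfolding set_lebesgue_integral_def
  proof (rule integral_FTC_atLeastAtMost)
    fix x
    have "(F has_real_derivative (t - x) * ?\<sigma>'' x) (at x within {0..t})"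
      unfolding F_def
      by (rule derivative_eq_intros refl | simp add: power2_eq_square power3_eq_cube algebra_simps)+
    then show "(F has_vector_derivative (t - x) * ?\<sigma>'' x) (at x within {0..t})"
      by (simp add: has_real_derivative_iff_has_vector_derivative)
  qed (use t in \<open>auto intro!: continuous_intros\<close>)
  moreover have "F t - F 0 = interpolating_scale \<delta> t - interpolating_scale \<delta> 0 - t * (- 9 * (1 - \<delta>))"
    unfolding F_def interpolating_scale_def
    by (simp add: power2_eq_square power3_eq_cube power4_eq_xxxx field_simps)
  ultimately show "interpolating_scale \<delta> t
      = interpolating_scale \<delta> 0 + t * (- 9 * (1 - \<delta>)) + (LBINT s:{0..t}. (t - s) * ?\<sigma>'' s)"
    by linarith
qed

lemma E_spline_counterexample_energy_finite:
  assumes \<delta>: "0 < \<delta>" "\<delta> < 1"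
    and ES: "is_E_spline (\<lambda>i. real i / 3) 3 (\<lambda>i. if i = 1 \<or> i = 2 then gaussian \<delta> else gaussian 1) \<mu>"
  shows "spline_energy \<mu> < \<top>"
proof -
  let ?\<sigma> = "interpolating_scale \<delta>"
  have pos: "0 < ?\<sigma> t" for t
    using \<delta> by (simp add: interpolating_scale_def add_pos_nonneg)
  have knots: "gaussian (?\<sigma> (real i / 3)) = (if i = 1 \<or> i = 2 then gaussian \<delta> else gaussian 1)"
    if "i \<le> 3" for i
    using that by (auto simp: interpolating_scale_def le_Suc_eq numeral_eq_Suc power2_eq_square)
  have "spline_energy \<mu> \<le> spline_energy (\<lambda>t. gaussian (?\<sigma> t))"
    using ES pos knots P2_gaussian unfolding is_E_spline_def by (simp (no_asm_simp))
  also have "\<dots> < \<top>"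
    using pos by (intro spline_energy_gaussian_curve_finite[OF _ has_weak_second_deriv_interpolating_scale])
      (auto intro!: continuous_intros)
  finally show ?thesis .
qed

theorem proposition11:
  "\<exists>\<delta>0>0. \<forall>\<delta>::real. 0 < \<delta> \<and> \<delta> < \<delta>0 \<longrightarrow>
     (\<forall>\<mu>. is_transport_spline (\<lambda>i. real i / 3) 3
              (\<lambda>i. if i = 1 \<or> i = 2 then gaussian \<delta> else gaussian 1) \<mu>
           \<longrightarrow> \<not> is_E_spline (\<lambda>i. real i / 3) 3
              (\<lambda>i. if i = 1 \<or> i = 2 then gaussian \<delta> else gaussian 1) \<mu>)"
proof (intro exI[of _ "3 / 23"] conjI allI impI notI)
  fix \<delta> :: real and \<mu> :: "real \<Rightarrow> real measure"
  let ?data = "\<lambda>i::nat. if i = 1 \<or> i = 2 then gaussian \<delta> else gaussian 1"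
  let ?S = "thirds_spline_middle 1 \<delta> \<delta> 1" and ?q = "quantile (gaussian 1)"
  assume \<delta>: "0 < \<delta> \<and> \<delta> < 3 / 23"
    and TS: "is_transport_spline (\<lambda>i. real i / 3) 3 ?data \<mu>"
    and ES: "is_E_spline (\<lambda>i. real i / 3) 3 ?data \<mu>"
  have "spline_energy \<mu> < \<top>"
    using \<delta> by (intro E_spline_counterexample_energy_finite[OF _ _ ES]) auto
  then obtain u v a where u: "u \<in> {0<..<1}" "?q u \<noteq> 0"
    and Q: "has_weak_second_deriv (\<lambda>t. quantile (\<mu> t) u) v a"
    using AE_quantile_neq[OF cdf_distribution_gaussian[OF zero_less_one] measure_gaussian_singleton]
    by (rule spline_energy_finite_obtain_quantile_curve)
  obtain t0 where t0: "1/3 < t0" "t0 < 1/2" "?S t0 = 0"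
    and slope: "(?S has_real_derivative 27 / 5 * (1 - \<delta>) * (2 * t0 - 1)) (at t0)"
    using thirds_spline_middle_simple_zero \<delta> by blast
  have "?q u = 0"
  proof (rule has_weak_second_deriv_abs_simple_zero[OF Q _ _ _ _ slope t0(3)])
    show "0 < t0" "t0 < 1" "0 < t0 - 1/3"
      using t0 by auto
    show "\<forall>t. \<bar>t - t0\<bar> < t0 - 1/3 \<longrightarrow> quantile (\<mu> t) u = \<bar>?S t\<bar> * ?q u"
      using t0 u \<delta> by (auto intro!: transport_spline_counterexample_quantile[OF TS])
    show "27 / 5 * (1 - \<delta>) * (2 * t0 - 1) \<noteq> 0"
      using t0 \<delta> by simp
  qed
  with u show False by simp
qed simp

end
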